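(* If $M\rightarrow_v N$, $t$ is a canonical term of $\Phi$ and $\langle\!\langle t\rangle\!\rangle=M$, then $t\rightarrow u$ in $\Phi$ for some term $u$ with $\langle\!\langle u\rangle\!\rangle=N$.
   Context: $\lambda$-terms: $M::=x\mid\lambda x.M\mid MN$, variables from a set $\Upsilon$ with a fixed total order, $FV(M)$ the ordered sequence of free variables. Values $V::=x\mid\lambda x.M$; weak call-by-value reduction $\rightarrow_v$: $(\lambda x.M)V\rightarrow_v M\{V/x\}$ for values $V$, closed under $ML$ and $LM$ contexts (no reduction under $\lambda$). $\Phi$: binary function symbol $\mathbf{app}$, constructors $c_{x,M}$ ($M$ a $\lambda$-term, $x\in\Upsilon$) of arity the length of $FV(\lambda x.M)$; $[\![x]\!]=x$, $[\![\lambda x.M]\!]=c_{x,M}(x_1,\dots,x_n)$ with $FV(\lambda x.M)=x_1,\dots,x_n$, $[\![MN]\!]=\mathbf{app}([\![M]\!],[\![N]\!])$; rules $\mathbf{app}(c_{x,M}(x_1,\dots,x_n),x)\rightarrow[\![M]\!]$; rewriting is call-by-value (a step replaces anywhere a subterm $l\sigma$ by $r\sigma$, $\sigma$ mapping variables to constructor terms, i.e. closed terms built only from constructors). $\langle\!\langle x\rangle\!\rangle=x$, $\langle\!\langle\mathbf{app}(u,v)\rangle\!\rangle=\langle\!\langle u\rangle\!\rangle\langle\!\langle v\rangle\!\rangle$, $\langle\!\langle c_{x,M}(t_1,\dots,t_n)\rangle\!\rangle=(\lambda x.M)\{\langle\!\langle t_1\rangle\!\rangle/x_1,\dots,\langle\!\langle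 t_n\rangle\!\rangle/x_n\}$. A closed term $t$ is canonical if it is a constructor term or $t=\mathbf{app}(u,v)$ with $u,v$ canonical. *)

theory Defs
  imports Main
begin

datatype lam = Var nat | Lam nat lam | App lam lam

fun fv :: "lam \<Rightarrow> nat set" where
  "fv (Var x) = {x}"
| "fv (Lam x M) = fv M - {x}"
| "fv (App M N) = fv M \<union> fv N"

definition fvs :: "lam \<Rightarrow> nat list" where
  "fvs M = sorted_list_of_set (fv M)"

text \<open>Simultaneous substitution (a partial map from variables to terms).
  Only ever applied with closed substituted terms, where it is capture-free.\<close>
fun psubst :: "(nat \<Rightarrow> lam option) \<Rightarrow> lam \<Rightarrow> lam" where
  "psubst \<sigma> (Var y) = (case \<sigma> y of None \<Rightarrow> Var y | Some N \<Rightarrow> N)"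
| "psubst \<sigma> (Lam y M) = Lam y (psubst (\<sigma>(y := None)) M)"
| "psubst \<sigma> (App M N) = App (psubst \<sigma> M) (psubst \<sigma> N)"

fun is_value :: "lam \<Rightarrow> bool" where
  "is_value (Var x) = True"
| "is_value (Lam x M) = True"
| "is_value (App M N) = False"

inductive betav :: "lam \<Rightarrow> lam \<Rightarrow> bool" where
  beta: "is_value V \<Longrightarrow> betav (App (Lam x M) V) (psubst (Map.empty(x \<mapsto> V)) M)"
| appL: "betav M M' \<Longrightarrow> betav (App M L) (App M' L)"
| appR: "betav M M' \<Longrightarrow> betav (App L M) (App L M')"

text \<open>Terms over the signature: variables, binary app, constructors c_{x,M}.\<close>
datatype trm = TV nat | TApp trm trm | TC nat lam "trm list"

inductive is_cterm :: "trm \<Rightarrow> bool" where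
  "length ts = length (fvs (Lam x M)) \<Longrightarrow> (\<forall>t\<in>set ts. is_cterm t) \<Longrightarrow> is_cterm (TC x M ts)"

fun enc :: "lam \<Rightarrow> trm" where
  "enc (Var x) = TV x"
| "enc (Lam x M) = TC x M (map TV (fvs (Lam x M)))"
| "enc (App M N) = TApp (enc M) (enc N)"

definition rules :: "(trm \<times> trm) set" where
  "rules = {(TApp (TC x M (map TV (fvs (Lam x M)))) (TV x), enc M) | x M. True}"

fun inst :: "(nat \<Rightarrow> trm) \<Rightarrow> trm \<Rightarrow> trm" where
  "inst \<sigma> (TV y) = \<sigma> y"
| "inst \<sigma> (TApp u v) = TApp (inst \<sigma> u) (inst \<sigma> v)"
| "inst \<sigma> (TC x M ts) = TC x M (map (inst \<sigma>) ts)"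

inductive rstep :: "trm \<Rightarrow> trm \<Rightarrow> bool" where
  root: "(l, r) \<in> rules \<Longrightarrow> (\<forall>y. is_cterm (\<sigma> y)) \<Longrightarrow> rstep (inst \<sigma> l) (inst \<sigma> r)"
| appL: "rstep u u' \<Longrightarrow> rstep (TApp u v) (TApp u' v)"
| appR: "rstep v v' \<Longrightarrow> rstep (TApp u v) (TApp u v')"
| arg: "i < length ts \<Longrightarrow> rstep (ts ! i) t' \<Longrightarrow> rstep (TC x M ts) (TC x M (ts[i := t']))"

fun dec :: "trm \<Rightarrow> lam" where
  "dec (TV x) = Var x"
| "dec (TApp u v) = App (dec u) (dec v)"
| "dec (TC x M ts) = psubst (map_of (zip (fvs (Lam x M)) (map dec ts))) (Lam x M)"

inductive canonical :: "trm \<Rightarrow> bool" where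
  "is_cterm t \<Longrightarrow> canonical t"
| "canonical u \<Longrightarrow> canonical v \<Longrightarrow> canonical (TApp u v)"

end

theory Submission
  imports Defs
begin

text \<open>Decoding sends applications to applications and constructor terms to closed values, so a
  \<open>\<beta>\<^sub>v\<close>-redex in the decoding of a canonical term \<open>t\<close> is the decoding of a subterm
  \<open>app(c\<^sub>x\<^sub>,\<^sub>P(t\<^sub>1,\<dots>,t\<^sub>n), v)\<close> with \<open>v\<close> a constructor term. This subterm is the instance of the rule
  for \<open>c\<^sub>x\<^sub>,\<^sub>P\<close> under \<open>x\<^sub>i \<mapsto> t\<^sub>i, x \<mapsto> v\<close>, and decoding commutes with instantiating \<open>[[P]]\<close>, so the
  rule's right-hand side decodes to the contractum.\<close>

definition closed_subst :: "(nat \<Rightarrow> lam option) \<Rightarrow> bool" where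
  "closed_subst \<rho> \<longleftrightarrow> (\<forall>z N. \<rho> z = Some N \<longrightarrow> fv N = {})"

lemma closed_subst_upd_None: "closed_subst \<rho> \<Longrightarrow> closed_subst (\<rho>(y := None))"
  by (simp add: closed_subst_def)

lemma psubst_cong: "(\<And>z. z \<in> fv M \<Longrightarrow> \<sigma> z = \<tau> z) \<Longrightarrow> psubst \<sigma> M = psubst \<tau> M"
proof (induction M arbitrary: \<sigma> \<tau>)
  case (Var x)
  then show ?case by simp
next
  case (Lam y Q)
  have "psubst (\<sigma>(y := None)) Q = psubst (\<tau>(y := None)) Q"
    by (rule Lam.IH) (simp add: Lam.prems)
  then show ?case by simp
next
  case (App M N)
  have "psubst \<sigma> M = psubst \<tau> M" "psubst \<sigma> N = psubst \<tau> N"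
    by (rule App.IH; simp add: App.prems)+
  then show ?case by simp
qed

lemma psubst_empty: "psubst Map.empty M = M"
  by (induction M) auto

lemma psubst_closed: "fv N = {} \<Longrightarrow> psubst \<tau> N = N"
  by (metis psubst_cong psubst_empty empty_iff)

lemma psubst_psubst:
  assumes "closed_subst \<rho>"
  shows "psubst \<tau> (psubst \<rho> P) = psubst (\<lambda>z. case \<rho> z of None \<Rightarrow> \<tau> z | Some N \<Rightarrow> Some N) P"
  using assms
proof (induction P arbitrary: \<rho> \<tau>)
  case (Var z)
  then show ?case by (cases "\<rho> z") (auto simp: closed_subst_def psubst_closed)
next
  case (Lam y Q)
  have "(\<lambda>z. case (\<rho>(y := None)) z of None \<Rightarrow> (\<tau>(y := None)) z | Some N \<Rightarrow> Some N)
      = (\<lambda>z. case \<rho> z of None \<Rightarrow> \<tau> z | Some N \<Rightarrow> Some N)(y := None)"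
    by (simp add: fun_eq_iff split: option.split)
  then show ?case
    by (simp del: fun_upd_apply add: Lam.IH[OF closed_subst_upd_None[OF Lam.prems]])
qed simp

lemma psubst_single_psubst:
  "closed_subst \<rho> \<Longrightarrow>
    psubst (Map.empty(x \<mapsto> V)) (psubst (\<rho>(x := None)) P) = psubst (\<rho>(x \<mapsto> V)) P"
  by (simp add: psubst_psubst closed_subst_upd_None)
    (auto intro!: arg_cong[where f = "\<lambda>\<sigma>. psubst \<sigma> P"] split: option.split)

lemma fv_psubst:
  "closed_subst \<rho> \<Longrightarrow> fv (psubst \<rho> M) \<subseteq> {z \<in> fv M. \<rho> z = None}"
proof (induction M arbitrary: \<rho>)
  case (Var z)
  then show ?case by (cases "\<rho> z") (auto simp: closed_subst_def)
next
  case (Lam y Q)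
  have "fv (psubst (\<rho>(y := None)) Q) \<subseteq> {z \<in> fv Q. (\<rho>(y := None)) z = None}"
    using Lam.IH[OF closed_subst_upd_None[OF Lam.prems]] .
  then show ?case by auto
next
  case (App M N)
  then show ?case using App.IH[OF App.prems] by auto
qed

lemma finite_fv: "finite (fv M)"
  by (induction M) auto

lemma set_fvs: "set (fvs M) = fv M"
  by (simp add: fvs_def finite_fv)

lemma distinct_fvs: "distinct (fvs M)"
  by (simp add: fvs_def)

lemma closed_subst_map_of_zip:
  "(\<And>N. N \<in> set Ns \<Longrightarrow> fv N = {}) \<Longrightarrow> closed_subst (map_of (zip xs Ns))"
  unfolding closed_subst_def by (blast dest: map_of_SomeD set_zip_rightD)

lemma fv_dec_cterm: "is_cterm t \<Longrightarrow> fv (dec t) = {}"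
proof (induction rule: is_cterm.induct)
  case (1 ts x M)
  let ?\<rho> = "map_of (zip (fvs (Lam x M)) (map dec ts))"
  have "closed_subst ?\<rho>"
    using "1.IH" by (intro closed_subst_map_of_zip) auto
  moreover have "dom ?\<rho> = fv (Lam x M)"
    using "1.hyps" by (simp add: set_fvs)
  ultimately show ?case
    using fv_psubst[of ?\<rho> "Lam x M"] by auto
qed

lemma dec_inst_enc: "dec (inst \<sigma> (enc P)) = psubst (\<lambda>z. Some (dec (\<sigma> z))) P"
proof (induction P)
  case (Lam x Q)
  have "dec (inst \<sigma> (enc (Lam x Q))) =
      Lam x (psubst ((map_of (zip (fvs (Lam x Q)) (map (\<lambda>z. dec (\<sigma> z)) (fvs (Lam x Q)))))(x := None)) Q)"
    by (simp add: comp_def del: fv.simps)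
  also have "\<dots> = Lam x (psubst ((\<lambda>z. Some (dec (\<sigma> z)))(x := None)) Q)"
    by (intro arg_cong[where f = "Lam x"] psubst_cong) (auto simp: map_of_zip_map set_fvs)
  finally show ?case by simp
qed simp_all

lemma canonical_App_cases:
  assumes "canonical t" "dec t = App A B"
  obtains u v where "t = TApp u v" "canonical u" "canonical v" "dec u = A" "dec v = B"
  using assms by cases (auto elim: is_cterm.cases)

lemma canonical_Lam_cases:
  assumes "canonical t" "dec t = Lam x M"
  obtains P ts where "t = TC x P ts" "is_cterm t"
    "M = psubst ((map_of (zip (fvs (Lam x P)) (map dec ts)))(x := None)) P"
  using assms
proof cases
  case 1
  moreover from this obtain y P ts where "t = TC y P ts"
    by cases
  ultimately show ?thesis
    using assms(2) that by auto
qed (use assms(2) in auto)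

lemma canonical_value_is_cterm: "canonical v \<Longrightarrow> is_value (dec v) \<Longrightarrow> is_cterm v"
  by (erule canonical.cases) auto

text \<open>The matcher sends the free variables of \<open>\<lambda>x.P\<close> to the arguments \<open>ts\<close> and \<open>x\<close> to \<open>v\<close>;
  variables outside \<open>fv P\<close> are sent to \<open>v\<close> as well, only to make it a constructor substitution.\<close>
lemma rstep_rule_instance:
  assumes ctu: "is_cterm (TC x P ts)" and ctv: "is_cterm v"
  shows "\<exists>u. rstep (TApp (TC x P ts) v) u \<and>
    dec u = psubst ((map_of (zip (fvs (Lam x P)) (map dec ts)))(x \<mapsto> dec v)) P"
proof -
  define xs where "xs = fvs (Lam x P)"
  define \<mu> where "\<mu> = (map_of (zip xs ts))(x \<mapsto> v)"
  define \<sigma> where "\<sigma> z = (case \<mu> z of None \<Rightarrow> v | Some s \<Rightarrow> s)" for z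
  from ctu have len: "length ts = length xs" and cts: "\<And>s. s \<in> set ts \<Longrightarrow> is_cterm s"
    by (auto simp: xs_def elim: is_cterm.cases)
  have x_notin: "x \<notin> set xs" and dist: "distinct xs"
    by (simp_all add: xs_def set_fvs distinct_fvs)
  have cterm_\<sigma>: "\<forall>z. is_cterm (\<sigma> z)"
    using ctv cts by (auto simp: \<sigma>_def \<mu>_def split: option.split dest!: map_of_SomeD set_zip_rightD)
  have "map \<sigma> xs = ts"
  proof (rule nth_equalityI)
    fix i assume "i < length (map \<sigma> xs)"
    moreover from this x_notin have "xs ! i \<noteq> x" by (auto dest: nth_mem)
    ultimately show "map \<sigma> xs ! i = ts ! i"
      using map_of_zip_nth[OF len[symmetric] dist] len by (simp add: \<sigma>_def \<mu>_def)
  qed (simp add: len)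
  moreover have "\<sigma> x = v"
    by (simp add: \<sigma>_def \<mu>_def)
  ultimately have "inst \<sigma> (TApp (TC x P (map TV xs)) (TV x)) = TApp (TC x P ts) v"
    by (simp add: comp_def)
  moreover have "(TApp (TC x P (map TV xs)) (TV x), enc P) \<in> rules"
    unfolding rules_def xs_def by blast
  ultimately have "rstep (TApp (TC x P ts) v) (inst \<sigma> (enc P))"
    using rstep.root cterm_\<sigma> by metis
  moreover have "dec (inst \<sigma> (enc P)) = psubst ((map_of (zip xs (map dec ts)))(x \<mapsto> dec v)) P"
  proof -
    have "(map_of (zip xs (map dec ts)))(x \<mapsto> dec v) = map_option dec \<circ> \<mu>"
      by (simp add: \<mu>_def zip_map2 map_of_map fun_eq_iff)
    moreover have "\<mu> z \<noteq> None" if "z \<in> fv P" for z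
    proof -
      have "z = x \<or> z \<in> set xs"
        using that by (auto simp: xs_def set_fvs)
      then show ?thesis
        using len[symmetric] by (auto simp: \<mu>_def simp del: not_None_eq)
    qed
    ultimately show ?thesis
      by (auto simp: dec_inst_enc \<sigma>_def intro!: psubst_cong split: option.split)
  qed
  ultimately show ?thesis by (auto simp: xs_def)
qed

lemma rstep_simulates_beta:
  assumes "is_value V" "canonical t" "dec t = App (Lam x M) V"
  shows "\<exists>u. rstep t u \<and> dec u = psubst (Map.empty(x \<mapsto> V)) M"
proof -
  obtain w v where t: "t = TApp w v" and "canonical w" "canonical v"
    and w: "dec w = Lam x M" and v: "dec v = V"
    using assms(2,3) by (rule canonical_App_cases)
  obtain P ts where w_TC: "w = TC x P ts" and "is_cterm w"
    and M: "M = psubst ((map_of (zip (fvs (Lam x P)) (map dec ts)))(x := None)) P"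
    using \<open>canonical w\<close> w by (rule canonical_Lam_cases)
  have "is_cterm v"
    using canonical_value_is_cterm \<open>canonical v\<close> v assms(1) by blast
  then obtain u where "rstep t u"
    and u: "dec u = psubst ((map_of (zip (fvs (Lam x P)) (map dec ts)))(x \<mapsto> V)) P"
    using rstep_rule_instance[OF \<open>is_cterm w\<close>[unfolded w_TC] \<open>is_cterm v\<close>]
    unfolding t w_TC v by blast
  have "closed_subst (map_of (zip (fvs (Lam x P)) (map dec ts)))"
  proof -
    from \<open>is_cterm w\<close> have "\<forall>s\<in>set ts. is_cterm s"
      by (cases rule: is_cterm.cases) (simp add: w_TC)
    then show ?thesis
      by (intro closed_subst_map_of_zip) (auto simp: fv_dec_cterm)
  qed
  then have "dec u = psubst (Map.empty(x \<mapsto> V)) M"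
    unfolding u M by (rule psubst_single_psubst[symmetric])
  with \<open>rstep t u\<close> show ?thesis by blast
qed

theorem lemma7:
  assumes "betav M N" and "canonical t" and "dec t = M"
  shows "\<exists>u. rstep t u \<and> dec u = N"
  using assms
proof (induction arbitrary: t rule: betav.induct)
  case (beta V x M)
  then show ?case by (rule rstep_simulates_beta)
next
  case (appL M M' L)
  obtain u v where t: "t = TApp u v" and "canonical u" "dec u = M" "dec v = L"
    using appL.prems by (rule canonical_App_cases)
  obtain u' where "rstep u u'" "dec u' = M'"
    using appL.IH[OF \<open>canonical u\<close> \<open>dec u = M\<close>] by blast
  then show ?case
    using t \<open>dec v = L\<close> by (intro exI[of _ "TApp u' v"]) (simp add: rstep.appL)
next
  case (appR M M' L)
  obtain u v where t: "t = TApp u v" and "canonical v" "dec u = L" "dec v = M"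
    using appR.prems by (rule canonical_App_cases)
  obtain v' where "rstep v v'" "dec v' = M'"
    using appR.IH[OF \<open>canonical v\<close> \<open>dec v = M\<close>] by blast
  then show ?case
    using t \<open>dec u = L\<close> by (intro exI[of _ "TApp u v'"]) (simp add: rstep.appR)
qed

end
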